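(* Let $X$ be a Hausdorff topological space, $\Phi$ a local semiflow on $X$, and $\mathscr A$ an attractor of $\Phi$. Then $\mathscr A$ is stable: for any neighborhood $U$ of $\mathscr A$ there is a neighborhood $V$ of $\mathscr A$ with $\Phi(\mathbb R^+)V\subset U$.
   Context: A local semiflow $\Phi$ on $X$ is a continuous map from an open subset $\mathcal D_\Phi\subset\mathbb R^+\times X$ to $X$ such that: (i) for each $x$ there is $T_x\in(0,\infty]$ with $(t,x)\in\mathcal D_\Phi$ iff $t\in[0,T_x)$; (ii) $\Phi(0,x)=x$; (iii) if $(t+s,x)\in\mathcal D_\Phi$ with $t,s\ge0$ then $\Phi(t+s,x)=\Phi(t,\Phi(s,x))$. Write $\Phi(t)x=\Phi(t,x)$, $\Phi(J)M=\{\Phi(t)x:x\in M,\ t\in J\cap[0,T_x)\}$, $\Phi(t)M=\Phi(\{t\})M$. Convention: $U$ is a neighborhood of $A$ if $\overline A\subset\mathrm{int}\,U$. A set $K$ is invariant if $\Phi(t)K\subset K$ and $K\subset\Phi(t)K$ for all $t\ge0$. $K$ attracts $B$ if $T_x=\infty$ for all $x\in B$ and for every neighborhood $V$ of $K$ there is $t_0>0$ with $\Phi(t)B\subset V$ for all $t>t_0$. A set is s-compact if every sequence in it has a subsequence converging to a point of the set. An attractor is a nonempty s-compact invariant set $\mathscr A$ for which there is a neighborhood $N$ of $\mathscr A$ such that $\mathscr A$ attracts $N$ and every s-compact invariant subset of $N$ is contained in $\mathscr A$. *)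

theory Defs
  imports "HOL-Analysis.Analysis"
begin

text \<open>A local semiflow is given by its escape-time function T (with T x in (0,\<infinity>])
  and the map Phi; its domain is D = {(t,x). 0 \<le> t < T x}. Values of Phi outside
  the domain are irrelevant.\<close>

definition sf_dom :: "('a \<Rightarrow> ereal) \<Rightarrow> (real \<times> 'a) set" where
  "sf_dom T = {(t, x). 0 \<le> t \<and> ereal t < T x}"

definition local_semiflow ::
  "('a::topological_space \<Rightarrow> ereal) \<Rightarrow> (real \<Rightarrow> 'a \<Rightarrow> 'a) \<Rightarrow> bool" where
  "local_semiflow T Phi \<longleftrightarrow>
     (\<forall>x. 0 < T x) \<and>
     openin (top_of_set ({0..} \<times> UNIV)) (sf_dom T) \<and>
     continuous_on (sf_dom T) (\<lambda>(t, x). Phi t x) \<and>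
     (\<forall>x. Phi 0 x = x) \<and>
     (\<forall>x t s. 0 \<le> t \<and> 0 \<le> s \<and> (t + s, x) \<in> sf_dom T \<longrightarrow>
        (t, Phi s x) \<in> sf_dom T \<and> Phi (t + s) x = Phi t (Phi s x))"

definition sf_image ::
  "('a \<Rightarrow> ereal) \<Rightarrow> (real \<Rightarrow> 'a \<Rightarrow> 'a) \<Rightarrow> real set \<Rightarrow> 'a set \<Rightarrow> 'a set" where
  "sf_image T Phi J M = {Phi t x | t x. x \<in> M \<and> t \<in> J \<and> 0 \<le> t \<and> ereal t < T x}"

definition nbhd :: "'a::topological_space set \<Rightarrow> 'a set \<Rightarrow> bool" where
  "nbhd A U \<longleftrightarrow> closure A \<subseteq> interior U"

definition sf_invariant ::
  "('a \<Rightarrow> ereal) \<Rightarrow> (real \<Rightarrow> 'a \<Rightarrow> 'a) \<Rightarrow> 'a set \<Rightarrow> bool" where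
  "sf_invariant T Phi K \<longleftrightarrow>
     (\<forall>t\<ge>0. sf_image T Phi {t} K \<subseteq> K \<and> K \<subseteq> sf_image T Phi {t} K)"

definition sf_attracts ::
  "('a::topological_space \<Rightarrow> ereal) \<Rightarrow> (real \<Rightarrow> 'a \<Rightarrow> 'a) \<Rightarrow> 'a set \<Rightarrow> 'a set \<Rightarrow> bool" where
  "sf_attracts T Phi K B \<longleftrightarrow>
     (\<forall>x\<in>B. T x = \<infinity>) \<and>
     (\<forall>V. nbhd K V \<longrightarrow> (\<exists>t0>0. \<forall>t>t0. sf_image T Phi {t} B \<subseteq> V))"

text \<open>s-compactness is the library notion seq_compact.\<close>
definition sf_attractor ::
  "('a::topological_space \<Rightarrow> ereal) \<Rightarrow> (real \<Rightarrow> 'a \<Rightarrow> 'a) \<Rightarrow> 'a set \<Rightarrow> bool" where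
  "sf_attractor T Phi A \<longleftrightarrow>
     A \<noteq> {} \<and> seq_compact A \<and> sf_invariant T Phi A \<and>
     (\<exists>N. nbhd A N \<and> sf_attracts T Phi A N \<and>
        (\<forall>K. K \<subseteq> N \<and> seq_compact K \<and> sf_invariant T Phi K \<longrightarrow> K \<subseteq> A))"

end

theory Submission
  imports Defs
begin

text \<open>Choose an open W with closure A \<subseteq> W \<subseteq> U inside the attracted neighbourhood N. Beyond
  some time t0 every orbit starting in N lies in W. On the compact time interval [0, t0] the
  flow is jointly continuous, and closure A is forward invariant, so by the tube lemma the
  points close enough to closure A stay in W up to time t0. Their common neighbourhood,
  intersected with N, is the required V.\<close>

lemma nbhd_open_iff: "open V \<Longrightarrow> nbhd A V \<longleftrightarrow> closure A \<subseteq> V"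
  by (simp add: nbhd_def interior_open)

lemma local_semiflow_tube:
  assumes flow: "local_semiflow T Phi" and "open W"
    and "ereal s < T x" and orbit: "\<forall>\<tau>\<in>{0..s}. Phi \<tau> x \<in> W"
  obtains B where "open B" "x \<in> B" "\<forall>y\<in>B. \<forall>\<tau>\<in>{0..s}. Phi \<tau> y \<in> W"
proof -
  define G where "G = sf_dom T \<inter> (\<lambda>(t, x). Phi t x) -` W"
  have "openin (top_of_set (sf_dom T)) G"
    using flow \<open>open W\<close> unfolding G_def local_semiflow_def
    by (auto intro: continuous_openin_preimage[of _ _ UNIV])
  moreover have "openin (top_of_set ({0..} \<times> UNIV)) (sf_dom T)"
    using flow unfolding local_semiflow_def by blast
  ultimately have "openin (top_of_set ({0..} \<times> UNIV)) G"
    using openin_trans by blast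
  then obtain H where "open H" and G_eq: "G = ({0..} \<times> UNIV) \<inter> H"
    by (meson openin_open)
  have "ereal \<tau> < T x" if "\<tau> \<le> s" for \<tau>
    using \<open>ereal s < T x\<close> that by (meson ereal_less_eq(3) le_less_trans)
  then have "{0..s} \<times> {x} \<subseteq> G"
    using orbit by (auto simp: G_def sf_dom_def)
  then have "{0..s} \<times> {x} \<subseteq> H"
    by (simp add: G_eq)
  then obtain I B where "open B" "x \<in> B" "I \<times> B \<subseteq> H" "{0..s} \<subseteq> I"
    using tube_lemma_left[of euclidean euclidean H "{0..s}" x] \<open>open H\<close>
    by (auto simp: euclidean_product_topology compact_Icc)
  then have "\<forall>y\<in>B. \<forall>\<tau>\<in>{0..s}. (\<tau>, y) \<in> G"
    by (auto simp: G_eq)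
  then show thesis
    using that \<open>open B\<close> \<open>x \<in> B\<close> by (auto simp: G_def)
qed

lemma local_semiflow_stable_up_to_time:
  assumes flow: "local_semiflow T Phi" and "open W" and "C \<subseteq> W"
    and global: "\<forall>x\<in>C. T x = \<infinity>" and forward: "\<forall>x\<in>C. \<forall>t\<ge>0. Phi t x \<in> C"
  obtains B where "open B" "C \<subseteq> B" "\<forall>y\<in>B. \<forall>\<tau>\<in>{0..s}. Phi \<tau> y \<in> W"
proof -
  define B where "B = \<Union>{B. open B \<and> (\<forall>y\<in>B. \<forall>\<tau>\<in>{0..s}. Phi \<tau> y \<in> W)}"
  have "C \<subseteq> B"
  proof
    fix x assume "x \<in> C"
    then have "\<forall>\<tau>\<in>{0..s}. Phi \<tau> x \<in> W"
      using forward \<open>C \<subseteq> W\<close> by auto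
    with \<open>x \<in> C\<close> global obtain Bx where "open Bx" "x \<in> Bx" "\<forall>y\<in>Bx. \<forall>\<tau>\<in>{0..s}. Phi \<tau> y \<in> W"
      using local_semiflow_tube[OF flow \<open>open W\<close>, of s x] by auto
    then show "x \<in> B"
      unfolding B_def by blast
  qed
  moreover have "open B" "\<forall>y\<in>B. \<forall>\<tau>\<in>{0..s}. Phi \<tau> y \<in> W"
    unfolding B_def by auto
  ultimately show thesis
    using that by blast
qed

lemma local_semiflow_closure_forward_invariant:
  assumes flow: "local_semiflow T Phi" and inv: "sf_invariant T Phi A"
    and global: "\<forall>x\<in>closure A. T x = \<infinity>" and "0 \<le> t"
  shows "Phi t ` closure A \<subseteq> closure A"
proof (rule image_closure_subset)
  have cont: "continuous_on (sf_dom T) (\<lambda>(t, x). Phi t x)"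
    using flow unfolding local_semiflow_def by blast
  have slice: "Pair t ` closure A \<subseteq> sf_dom T"
    using global \<open>0 \<le> t\<close> by (auto simp: sf_dom_def)
  have "continuous_on (closure A) (\<lambda>x. (\<lambda>(t, x). Phi t x) (t, x))"
    by (rule continuous_on_compose2[OF cont _ slice]) (intro continuous_intros)
  then show "continuous_on (closure A) (Phi t)"
    by simp
  have "\<forall>x\<in>A. T x = \<infinity>"
    using global closure_subset by blast
  then have "Phi t ` A \<subseteq> sf_image T Phi {t} A"
    using \<open>0 \<le> t\<close> by (auto simp: sf_image_def)
  also have "\<dots> \<subseteq> A"
    using inv \<open>0 \<le> t\<close> by (simp add: sf_invariant_def)
  finally show "Phi t ` A \<subseteq> closure A"
    using closure_subset by blast
qed simp

lemma sf_image_subset_early_late: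
  assumes global: "\<forall>x\<in>N. T x = \<infinity>"
    and late: "\<And>t. t > t0 \<Longrightarrow> sf_image T Phi {t} N \<subseteq> W"
    and early: "\<forall>y\<in>B. \<forall>\<tau>\<in>{0..t0}. Phi \<tau> y \<in> W"
    and "V \<subseteq> B" "V \<subseteq> N"
  shows "sf_image T Phi {0..} V \<subseteq> W"
proof
  fix z assume "z \<in> sf_image T Phi {0..} V"
  then obtain \<tau> y where z: "z = Phi \<tau> y" "y \<in> B" "y \<in> N" "0 \<le> \<tau>"
    unfolding sf_image_def using \<open>V \<subseteq> B\<close> \<open>V \<subseteq> N\<close> by blast
  show "z \<in> W"
  proof (cases "\<tau> \<le> t0")
    case False
    have "ereal \<tau> < T y"
      using global z by simp
    with z have "z \<in> sf_image T Phi {\<tau>} N"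
      unfolding sf_image_def by blast
    with False late[of \<tau>] show ?thesis by auto
  qed (use z early in auto)
qed

theorem theorem4p5:
  fixes T :: "'a::t2_space \<Rightarrow> ereal" and Phi :: "real \<Rightarrow> 'a \<Rightarrow> 'a" and A :: "'a set"
  assumes "local_semiflow T Phi"
    and "sf_attractor T Phi A"
  shows "\<forall>U. nbhd A U \<longrightarrow> (\<exists>V. nbhd A V \<and> sf_image T Phi {0..} V \<subseteq> U)"
proof (intro allI impI)
  fix U assume "nbhd A U"
  obtain N where "nbhd A N" and global: "\<forall>x\<in>N. T x = \<infinity>"
    and attract: "\<And>V. nbhd A V \<Longrightarrow> \<exists>t0>0. \<forall>t>t0. sf_image T Phi {t} N \<subseteq> V"
    using assms(2) unfolding sf_attractor_def sf_attracts_def by blast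
  define W where "W = interior U \<inter> interior N"
  have "open W" "closure A \<subseteq> W"
    using \<open>nbhd A U\<close> \<open>nbhd A N\<close> by (auto simp: W_def nbhd_def)
  then obtain t0 where late: "\<And>t. t > t0 \<Longrightarrow> sf_image T Phi {t} N \<subseteq> W"
    using attract nbhd_open_iff by blast
  have "closure A \<subseteq> N"
    using \<open>nbhd A N\<close> interior_subset unfolding nbhd_def by blast
  with global have global_A: "\<forall>x\<in>closure A. T x = \<infinity>"
    by blast
  moreover have "sf_invariant T Phi A"
    using assms(2) by (simp add: sf_attractor_def)
  ultimately have "\<forall>x\<in>closure A. \<forall>t\<ge>0. Phi t x \<in> closure A"
    using local_semiflow_closure_forward_invariant[OF assms(1)] by blast
  then obtain B where "open B" "closure A \<subseteq> B" and early: "\<forall>y\<in>B. \<forall>\<tau>\<in>{0..t0}. Phi \<tau> y \<in> W"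
    using local_semiflow_stable_up_to_time[OF assms(1) \<open>open W\<close> \<open>closure A \<subseteq> W\<close> global_A]
    by blast
  have "sf_image T Phi {0..} (B \<inter> interior N) \<subseteq> W"
    using sf_image_subset_early_late[OF global late early] interior_subset by blast
  moreover have "nbhd A (B \<inter> interior N)"
    using \<open>open B\<close> \<open>closure A \<subseteq> B\<close> \<open>nbhd A N\<close> by (auto simp: nbhd_def interior_open)
  ultimately show "\<exists>V. nbhd A V \<and> sf_image T Phi {0..} V \<subseteq> U"
    using interior_subset by (auto simp: W_def)
qed

end
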